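(* Under the hypotheses of the preceding statement (for every $\alpha\le1/10$, $r_1\ge r_0(\alpha)$, $m$ sufficiently large, $H$ an $(\alpha,r_1,m)$-good graph on $A\cup B$, $0\le r_2\le \alpha^5 r_1/\log r_1$, and $R\supseteq H$ an $(r_1+r_2)$-regular graph on $A\cup B$), the graph $R$ admits at least $$\left(\frac{r_1-r_2}{e^2}\right)^{(r_1-r_2)m}$$ distinct $1$-factorizations.
   Context: A graph $H=(A\cup B,E)$ is $(\alpha,r,m)$-good if: (G1) $H$ is an $r$-regular balanced bipartite graph with parts $A,B$, $|A|=|B|=m$; and (G2) every balanced bipartite subgraph $H'=(A'\cup B',E')$ of $H$ with $A'\subseteq A$, $B'\subseteq B$, $|A'|=|B'|\ge(1-\alpha)m$ and $\delta(H')\ge(1-2\alpha)r$ contains a perfect matching. A $1$-factorization is a partition of the edge set into perfect matchings. *)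

theory Defs
  imports Complex_Main
begin

definition bip_deg_A :: "('a \<times> 'b) set \<Rightarrow> 'a \<Rightarrow> nat" where
  "bip_deg_A E a = card {b. (a, b) \<in> E}"

definition bip_deg_B :: "('a \<times> 'b) set \<Rightarrow> 'b \<Rightarrow> nat" where
  "bip_deg_B E b = card {a. (a, b) \<in> E}"

definition bip_graph :: "'a set \<Rightarrow> 'b set \<Rightarrow> ('a \<times> 'b) set \<Rightarrow> bool" where
  "bip_graph A B E \<longleftrightarrow> finite A \<and> finite B \<and> E \<subseteq> A \<times> B"

definition bip_regular :: "'a set \<Rightarrow> 'b set \<Rightarrow> ('a \<times> 'b) set \<Rightarrow> nat \<Rightarrow> bool" where
  "bip_regular A B E r \<longleftrightarrow> bip_graph A B E \<and>
     (\<forall>a\<in>A. bip_deg_A E a = r) \<and> (\<forall>b\<in>B. bip_deg_B E b = r)"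

definition perfect_matching :: "'a set \<Rightarrow> 'b set \<Rightarrow> ('a \<times> 'b) set \<Rightarrow> ('a \<times> 'b) set \<Rightarrow> bool" where
  "perfect_matching A B E M \<longleftrightarrow> M \<subseteq> E \<and>
     (\<forall>a\<in>A. \<exists>!b. (a, b) \<in> M) \<and> (\<forall>b\<in>B. \<exists>!a. (a, b) \<in> M)"

definition good :: "real \<Rightarrow> nat \<Rightarrow> nat \<Rightarrow> 'a set \<Rightarrow> 'b set \<Rightarrow> ('a \<times> 'b) set \<Rightarrow> bool" where
  "good \<alpha> r m A B E \<longleftrightarrow>
     bip_regular A B E r \<and> card A = m \<and> card B = m \<and>
     (\<forall>A' B' E'. A' \<subseteq> A \<longrightarrow> B' \<subseteq> B \<longrightarrow> E' \<subseteq> E \<inter> (A' \<times> B') \<longrightarrow>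
        card A' = card B' \<longrightarrow> real (card A') \<ge> (1 - \<alpha>) * real m \<longrightarrow>
        (\<forall>a\<in>A'. real (bip_deg_A E' a) \<ge> (1 - 2 * \<alpha>) * real r) \<longrightarrow>
        (\<forall>b\<in>B'. real (bip_deg_B E' b) \<ge> (1 - 2 * \<alpha>) * real r) \<longrightarrow>
        (\<exists>M. perfect_matching A' B' E' M))"

definition one_factorizations :: "'a set \<Rightarrow> 'b set \<Rightarrow> ('a \<times> 'b) set \<Rightarrow> ('a \<times> 'b) set set set" where
  "one_factorizations A B E = {F. (\<forall>M\<in>F. M \<noteq> {} \<and> perfect_matching A B E M) \<and> \<Union>F = E \<and>
      (\<forall>M\<in>F. \<forall>M'\<in>F. M \<noteq> M' \<longrightarrow> M \<inter> M' = {})}"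

end

theory Submission
  imports Defs "HOL-Analysis.Convex" "HOL-Computational_Algebra.Fundamental_Theorem_Algebra"
begin

(*
  Only the (r1 + r2)-regularity of R matters.

  Dividing the biadjacency matrix of a k-regular bipartite graph with sides of size m by k
  gives a doubly stochastic matrix, so by the weak van der Waerden bound perm >= e^-m the graph
  has at least (k/e)^m perfect matchings.  The permanent bound follows Gurvits: differentiating
  p(x) = prod_r sum_j a_rj x_j once in each of x_(n-1), ..., x_i and then setting these
  variables to 0 gives polynomials q_i which do not vanish when all Re x_j > 0.  Hence q_(i+1),
  as a polynomial in x_i, has only negative real roots, which makes the passage from q_(i+1) to
  q_i lose at most a factor e in the capacity inf q(x) / prod_j x_j; q_n has capacity >= 1 by
  AM-GM, and q_0 = perm.

  Removing a perfect matching from a k-regular graph leaves a (k-1)-regular one, so R has at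
  least prod_(j<=k) (j/e)^m = (k!)^m e^-km sequences of k perfect matchings partitioning its
  edges, and each 1-factorization arises from at most k^k of them.  With k! >= 2 (k/e)^k and
  k^k <= 2^m this leaves (k/e^2)^km 1-factorizations for k = r1 + r2, which is at least the
  claimed bound when 2 r2 <= r1.
*)

section \<open>Univariate polynomials\<close>

lemma coeff_1_prod_linear:
  fixes \<alpha> \<beta> :: "'b \<Rightarrow> 'a::field"
  assumes "finite S"
  shows "coeff (\<Prod>r\<in>S. [:\<alpha> r, \<beta> r:]) 1 = (\<Sum>r\<in>S. \<beta> r * (\<Prod>s\<in>S - {r}. \<alpha> s))"
proof -
  have "coeff (\<Prod>r\<in>S. [:\<alpha> r, \<beta> r:]) 1 = poly (pderiv (\<Prod>r\<in>S. [:\<alpha> r, \<beta> r:])) 0"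
    by (simp add: poly_0_coeff_0 coeff_pderiv)
  also have "\<dots> = (\<Sum>r\<in>S. \<beta> r * (\<Prod>s\<in>S - {r}. \<alpha> s))"
    unfolding pderiv_prod poly_sum poly_mult poly_prod
    by (rule sum.cong) (auto simp: pderiv_pCons)
  finally show ?thesis .
qed

lemma degree_coeff_prod_linear:
  fixes \<alpha> \<beta> :: "'b \<Rightarrow> 'a::field"
  assumes "finite S"
  shows "degree (\<Prod>r\<in>S. [:\<alpha> r, \<beta> r:]) \<le> card S \<and> coeff (\<Prod>r\<in>S. [:\<alpha> r, \<beta> r:]) (card S) = (\<Prod>r\<in>S. \<beta> r)"
  using assms
proof (induction S rule: finite_induct)
  case empty
  then show ?case by simp
next
  case (insert s S)
  let ?Q = "\<Prod>r\<in>S. [:\<alpha> r, \<beta> r:]"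
  have "degree [:\<alpha> s, \<beta> s:] \<le> 1" by simp
  then have "degree ([:\<alpha> s, \<beta> s:] * ?Q) \<le> Suc (card S)"
    using insert.IH degree_mult_le[of "[:\<alpha> s, \<beta> s:]" ?Q] by linarith
  moreover have "coeff ?Q (Suc (card S)) = 0"
    using insert.IH by (intro coeff_eq_0) simp
  then have "coeff ([:\<alpha> s, \<beta> s:] * ?Q) (Suc (card S)) = \<beta> s * (\<Prod>r\<in>S. \<beta> r)"
    using insert.IH by (simp add: mult_pCons_left coeff_pCons)
  ultimately show ?case using insert by simp
qed

lemma Re_coeff_1_div_coeff_0_pos:
  fixes P :: "complex poly"
  assumes "degree P \<ge> 1" and "\<And>r. poly P r = 0 \<Longrightarrow> Re r < 0"
  shows "Re (coeff P 1 / coeff P 0) > 0"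
  using assms
proof (induction "degree P" arbitrary: P rule: less_induct)
  case less
  have "\<not> constant (poly P)" using less.prems(1) constant_degree[of P] by simp
  then obtain r where r: "poly P r = 0" using fundamental_theorem_of_algebra by blast
  then obtain Q where PQ: "P = [:-r, 1:] * Q" by (metis dvdE poly_eq_0_iff_dvd)
  have "Q \<noteq> 0" using less.prems(1) PQ by auto
  then have dQ: "degree P = Suc (degree Q)" unfolding PQ by (subst degree_mult_eq) auto
  have "Re r < 0" using less.prems(2) r by blast
  have Q_roots: "\<And>z. poly Q z = 0 \<Longrightarrow> Re z < 0" using less.prems(2) PQ by auto
  then have "coeff Q 0 \<noteq> 0" by (metis order.irrefl poly_0_coeff_0 zero_complex.sel(1))
  \<comment> \<open>Each root contributes \<open>-1/r\<close> to the ratio, and \<open>Re (-1/r) > 0\<close>.\<close>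
  have "coeff P 0 = - r * coeff Q 0" "coeff P 1 = coeff Q 0 - r * coeff Q 1"
    unfolding PQ by (simp_all add: mult_pCons_left coeff_pCons)
  moreover have "r \<noteq> 0" using \<open>Re r < 0\<close> by auto
  ultimately have ratio: "coeff P 1 / coeff P 0 = - 1 / r + coeff Q 1 / coeff Q 0"
    using \<open>coeff Q 0 \<noteq> 0\<close> by (simp add: field_simps)
  have "Re (- 1 / r) > 0"
    using \<open>Re r < 0\<close> by (simp add: Re_divide divide_neg_pos add_pos_nonneg)
  moreover have "Re (coeff Q 1 / coeff Q 0) \<ge> 0"
  proof (cases "degree Q = 0")
    case True
    then show ?thesis by (simp add: coeff_eq_0)
  next
    case False
    then show ?thesis using less.hyps[of Q] dQ Q_roots by fastforce
  qed
  ultimately show ?case unfolding ratio by simp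
qed

lemma negative_real_roots_factorization:
  fixes P :: "complex poly"
  assumes "\<And>r. poly P r = 0 \<Longrightarrow> Im r = 0 \<and> Re r < 0"
  shows "\<exists>\<rho>::nat \<Rightarrow> real. (\<forall>j<degree P. \<rho> j > 0) \<and>
           P = smult (lead_coeff P) (\<Prod>j<degree P. [:of_real (\<rho> j), 1:])"
  using assms
proof (induction "degree P" arbitrary: P)
  case 0
  then show ?case by (auto elim!: degree_eq_zeroE)
next
  case (Suc d)
  have "\<not> constant (poly P)" using Suc.hyps(2) constant_degree[of P] by simp
  then obtain r where r: "poly P r = 0" using fundamental_theorem_of_algebra by blast
  then obtain Q where PQ: "P = [:-r, 1:] * Q" by (metis dvdE poly_eq_0_iff_dvd)
  have "Q \<noteq> 0" using Suc.hyps(2) PQ by auto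
  then have dQ: "degree Q = d" using Suc.hyps(2) unfolding PQ by (subst (asm) degree_mult_eq) auto
  have lc: "lead_coeff P = lead_coeff Q" unfolding PQ by (simp only: lead_coeff_mult) simp
  obtain \<rho> where \<rho>: "\<forall>j<d. \<rho> j > 0" "Q = smult (lead_coeff Q) (\<Prod>j<d. [:of_real (\<rho> j), 1:])"
    using Suc.hyps(1)[OF dQ[symmetric]] Suc.prems PQ dQ by auto
  have rr: "r = of_real (Re r)" "Re r < 0" using Suc.prems[OF r] by (auto simp: complex_eq_iff)
  define \<rho>' where "\<rho>' = \<rho>(d := - Re r)"
  have "(\<Prod>j<d. [:complex_of_real (\<rho>' j), 1:]) = (\<Prod>j<d. [:of_real (\<rho> j), 1:])"
    unfolding \<rho>'_def by (intro prod.cong) auto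
  moreover have "[:complex_of_real (\<rho>' d), 1:] = [:-r, 1:]"
    unfolding \<rho>'_def using rr(1) by (simp add: complex_eq_iff)
  ultimately have "(\<Prod>j<Suc d. [:of_real (\<rho>' j), 1:]) = (\<Prod>j<d. [:of_real (\<rho> j), 1:]) * [:-r, 1:]"
    by simp
  then have "P = smult (lead_coeff P) (\<Prod>j<Suc d. [:of_real (\<rho>' j), 1:])"
    unfolding lc using \<rho>(2) PQ by (metis mult.commute mult_smult_left)
  moreover have "\<forall>j<Suc d. \<rho>' j > 0" using \<rho>(1) rr(2) unfolding \<rho>'_def by auto
  ultimately show ?case using Suc.hyps(2) by auto
qed

lemma prod_le_mean_power:
  fixes x :: "nat \<Rightarrow> real"
  assumes "d \<ge> 1" "\<forall>j<d. x j \<ge> 0"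
  shows "(\<Prod>j<d. x j) \<le> ((\<Sum>j<d. x j) / d) ^ d"
proof -
  have nonneg: "(\<Prod>j<d. x j) \<ge> 0" using assms by (intro prod_nonneg) auto
  have "(\<Prod>j<d. x j) powr (1 / d) \<le> (\<Sum>j<d. x j) / d"
    using arith_geom_mean[of "{..<d}" x] assms by (auto simp: lessThan_empty_iff sum_divide_distrib)
  then have "((\<Prod>j<d. x j) powr (1 / d)) ^ d \<le> ((\<Sum>j<d. x j) / d) ^ d"
    by (intro power_mono) simp_all
  also have "((\<Prod>j<d. x j) powr (1 / d)) ^ d = (\<Prod>j<d. x j)"
  proof (cases "(\<Prod>j<d. x j) = 0")
    case False
    then show ?thesis using assms nonneg by (simp add: powr_powr flip: powr_realpow)
  next
    case True
    then show ?thesis using assms by (simp del: prod_zero_iff)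
  qed
  finally show ?thesis .
qed

text \<open>For \<open>p(t) = c \<Prod>j<d. (t + \<rho>\<^sub>j)\<close> the right-hand side is \<open>p'(0)\<close>. At
  \<open>t = p(0)/p'(0)\<close>, AM-GM gives \<open>p(t) \<le> e p(0)\<close>, hence \<open>M t \<le> e p(0)\<close> (Gurvits).\<close>
lemma univariate_capacity_bound:
  fixes \<rho> :: "nat \<Rightarrow> real"
  assumes d: "d \<ge> 1" and c: "c > 0" and \<rho>: "\<forall>j<d. \<rho> j > 0"
    and M: "\<forall>t>0. M * t \<le> c * (\<Prod>j<d. t + \<rho> j)"
  shows "M / exp 1 \<le> c * (\<Prod>j<d. \<rho> j) * (\<Sum>j<d. 1 / \<rho> j)"
proof -
  define p0 where "p0 = c * (\<Prod>j<d. \<rho> j)"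
  define s where "s = (\<Sum>j<d. 1 / \<rho> j)"
  have p0: "p0 > 0" unfolding p0_def using c \<rho> by (intro mult_pos_pos prod_pos) auto
  have s: "s > 0" unfolding s_def using \<rho> d by (intro sum_pos) (auto simp: lessThan_empty_iff)
  define t where "t = 1 / s"
  have t: "t > 0" unfolding t_def using s by simp
  have "M * t \<le> p0 * (\<Prod>j<d. 1 + t / \<rho> j)"
  proof -
    have "(\<Prod>j<d. t + \<rho> j) = (\<Prod>j<d. \<rho> j * (1 + t / \<rho> j))"
      using \<rho> by (intro prod.cong) (auto simp: field_simps)
    then have "(\<Prod>j<d. t + \<rho> j) = (\<Prod>j<d. \<rho> j) * (\<Prod>j<d. 1 + t / \<rho> j)"
      by (simp add: prod.distrib)
    then show ?thesis using M t unfolding p0_def by (metis mult.assoc)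
  qed
  also have "\<dots> \<le> p0 * ((\<Sum>j<d. 1 + t / \<rho> j) / d) ^ d"
    using p0 \<rho> t by (intro mult_left_mono prod_le_mean_power d) (auto intro!: add_nonneg_nonneg)
  also have "(\<Sum>j<d. 1 + t / \<rho> j) = d + t * s"
    unfolding s_def by (simp add: sum.distrib sum_distrib_left)
  also have "(d + t * s) / d = 1 + 1 / real d"
    using d s unfolding t_def by (simp add: field_simps)
  also have "(1 + 1 / real d) ^ d \<le> exp 1"
    using d by (intro exp_ge_one_plus_x_over_n_power_n) auto
  finally have "M * t \<le> p0 * exp 1" using p0 by (simp add: mult_left_mono order_trans)
  then show ?thesis using s unfolding t_def p0_def s_def by (simp add: field_simps)
qed

lemma coeff_1_ge_of_negative_real_roots:
  fixes P :: "complex poly"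
  assumes deg: "degree P \<ge> 1" and lead: "lead_coeff P = of_real c" "c > 0"
    and roots: "\<And>r. poly P r = 0 \<Longrightarrow> Im r = 0 \<and> Re r < 0"
    and bound: "\<And>t. t > 0 \<Longrightarrow> M * t \<le> Re (poly P (of_real t))"
  shows "M / exp 1 \<le> Re (coeff P 1)"
proof -
  obtain \<rho> where \<rho>: "\<forall>j<degree P. \<rho> j > 0"
    and P: "P = smult (of_real c) (\<Prod>j<degree P. [:of_real (\<rho> j), 1:])"
    using negative_real_roots_factorization[of P] roots lead by auto
  have prod_sum: "(\<Prod>j<degree P. \<rho> j) * (\<Sum>j<degree P. 1 / \<rho> j) = (\<Sum>r<degree P. \<Prod>s\<in>{..<degree P} - {r}. \<rho> s)"
    unfolding sum_distrib_left using \<rho> by (intro sum.cong refl) (subst prod_diff1; auto)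
  have "M / exp 1 \<le> c * (\<Prod>j<degree P. \<rho> j) * (\<Sum>j<degree P. 1 / \<rho> j)"
  proof (rule univariate_capacity_bound[OF deg \<open>c > 0\<close> \<rho>], intro allI impI)
    fix t :: real assume "t > 0"
    have "poly P (of_real t) = of_real (c * (\<Prod>j<degree P. t + \<rho> j))"
      by (subst P) (simp add: poly_prod of_real_prod add.commute)
    then show "M * t \<le> c * (\<Prod>j<degree P. t + \<rho> j)"
      using bound[OF \<open>t > 0\<close>] by (metis Re_complex_of_real)
  qed
  also have "\<dots> = c * (\<Sum>r<degree P. \<Prod>s\<in>{..<degree P} - {r}. \<rho> s)"
    using prod_sum by (simp add: mult.assoc)
  also have "\<dots> = Re (coeff P 1)"
  proof -
    have "coeff P 1 = of_real c * (\<Sum>r<degree P. \<Prod>s\<in>{..<degree P} - {r}. of_real (\<rho> s))"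
      using arg_cong[OF P, of "\<lambda>Q. coeff Q 1"]
        coeff_1_prod_linear[of "{..<degree P}" "\<lambda>j. complex_of_real (\<rho> j)" "\<lambda>_. 1"] by simp
    also have "\<dots> = of_real (c * (\<Sum>r<degree P. \<Prod>s\<in>{..<degree P} - {r}. \<rho> s))"
      by simp
    finally show ?thesis by (metis Re_complex_of_real)
  qed
  finally show ?thesis .
qed

section \<open>Partial derivatives of a product of linear forms\<close>

definition arrangements :: "nat \<Rightarrow> nat \<Rightarrow> nat list set" where
  "arrangements n l = {ts. distinct ts \<and> length ts = l \<and> set ts \<subseteq> {..<n}}"

definition permanent :: "nat \<Rightarrow> (nat \<Rightarrow> nat \<Rightarrow> real) \<Rightarrow> real" where
  "permanent n a = (\<Sum>ts\<in>arrangements n n. \<Prod>c<n. a (ts ! c) c)"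

definition doubly_stochastic :: "nat \<Rightarrow> (nat \<Rightarrow> nat \<Rightarrow> real) \<Rightarrow> bool" where
  "doubly_stochastic n a \<longleftrightarrow> (\<forall>r c. a r c \<ge> 0) \<and>
     (\<forall>r<n. (\<Sum>c<n. a r c) = 1) \<and> (\<forall>c<n. (\<Sum>r<n. a r c) = 1)"

definition row_form :: "(nat \<Rightarrow> nat \<Rightarrow> real) \<Rightarrow> nat \<Rightarrow> nat \<Rightarrow> (nat \<Rightarrow> 'a::real_normed_field) \<Rightarrow> 'a" where
  "row_form a i r x = (\<Sum>j<i. of_real (a r j) * x j)"

definition arrangement_weight :: "(nat \<Rightarrow> nat \<Rightarrow> real) \<Rightarrow> nat \<Rightarrow> nat list \<Rightarrow> real" where
  "arrangement_weight a i ts = (\<Prod>k<length ts. a (ts ! k) (i + k))"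

text \<open>\<open>deriv_prod a n i\<close> is the polynomial in \<open>x\<^sub>0, \<dots>, x\<^sub>i\<^sub>-\<^sub>1\<close> obtained from
  \<open>\<Prod>r<n. \<Sum>j<n. a\<^sub>r\<^sub>j x\<^sub>j\<close> by differentiating once in each of \<open>x\<^sub>i, \<dots>, x\<^sub>n\<^sub>-\<^sub>1\<close> and then
  setting these variables to \<open>0\<close>: in the summand for \<open>ts\<close>, row \<open>ts ! k\<close> is differentiated in
  \<open>x\<^sub>i\<^sub>+\<^sub>k\<close>.\<close>
definition deriv_prod :: "(nat \<Rightarrow> nat \<Rightarrow> real) \<Rightarrow> nat \<Rightarrow> nat \<Rightarrow> (nat \<Rightarrow> 'a::real_normed_field) \<Rightarrow> 'a" where
  "deriv_prod a n i x = (\<Sum>ts\<in>arrangements n (n - i).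
     of_real (arrangement_weight a i ts) * (\<Prod>r\<in>{..<n} - set ts. row_form a i r x))"

definition deriv_prod_poly :: "(nat \<Rightarrow> nat \<Rightarrow> real) \<Rightarrow> nat \<Rightarrow> nat \<Rightarrow> (nat \<Rightarrow> 'a::real_normed_field) \<Rightarrow> 'a poly" where
  "deriv_prod_poly a n i x = (\<Sum>ts\<in>arrangements n (n - Suc i).
     [:of_real (arrangement_weight a (Suc i) ts):] * (\<Prod>r\<in>{..<n} - set ts. [:row_form a i r x, of_real (a r i):]))"

lemma finite_arrangements: "finite (arrangements n l)"
proof (rule finite_subset)
  show "arrangements n l \<subseteq> {xs. set xs \<subseteq> {..<n} \<and> length xs = l}"
    unfolding arrangements_def by auto
qed (simp add: finite_lists_length_eq)

lemma upt_in_arrangements: "l \<le> n \<Longrightarrow> [0..<l] \<in> arrangements n l"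
  unfolding arrangements_def by auto

lemma card_diff_arrangement:
  assumes "ts \<in> arrangements n l"
  shows "card ({..<n} - set ts) = n - l"
proof -
  have "card (set ts) = l" using assms unfolding arrangements_def by (auto simp: distinct_card)
  then show ?thesis using assms unfolding arrangements_def by (simp add: card_Diff_subset)
qed

lemma set_arrangement_full:
  assumes "ts \<in> arrangements n n"
  shows "set ts = {..<n}"
proof -
  have "card (set ts) = card {..<n}" "set ts \<subseteq> {..<n}"
    using assms unfolding arrangements_def by (auto simp: distinct_card)
  then show ?thesis by (intro card_subset_eq) auto
qed

lemma sum_arrangements_Suc:
  "(\<Sum>ts\<in>arrangements n (Suc l). f ts) = (\<Sum>ts\<in>arrangements n l. \<Sum>r\<in>{..<n} - set ts. f (r # ts))"
proof -
  have bij: "bij_betw (\<lambda>(ts, r). r # ts) (SIGMA ts:arrangements n l. {..<n} - set ts) (arrangements n (Suc l))"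
  proof (rule bij_betwI[where g = "\<lambda>ts. (tl ts, hd ts)"])
    show "(\<lambda>ts. (tl ts, hd ts)) \<in> arrangements n (Suc l) \<rightarrow> (SIGMA ts:arrangements n l. {..<n} - set ts)"
      by (auto simp: arrangements_def length_Suc_conv)
    show "\<And>ts. ts \<in> arrangements n (Suc l) \<Longrightarrow> (case (tl ts, hd ts) of (ts, r) \<Rightarrow> r # ts) = ts"
      by (auto simp: arrangements_def length_Suc_conv)
  qed (auto simp: arrangements_def)
  have "(\<Sum>ts\<in>arrangements n l. \<Sum>r\<in>{..<n} - set ts. f (r # ts))
      = (\<Sum>(ts, r)\<in>(SIGMA ts:arrangements n l. {..<n} - set ts). f (r # ts))"
    by (rule sum.Sigma) (auto simp: finite_arrangements)
  also have "\<dots> = (\<Sum>ts\<in>arrangements n (Suc l). f ts)"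
    using sum.reindex_bij_betw[OF bij, of f] by (simp add: case_prod_unfold)
  finally show ?thesis by simp
qed

lemma arrangement_weight_Cons:
  "arrangement_weight a i (r # ts) = a r i * arrangement_weight a (Suc i) ts"
  unfolding arrangement_weight_def by (simp only: length_Cons prod.lessThan_Suc_shift) simp

lemma arrangement_weight_pos:
  assumes "ts \<in> arrangements n (n - i)" and "\<forall>r<n. \<forall>c. i \<le> c \<and> c < n \<longrightarrow> a r c > 0"
  shows "arrangement_weight a i ts > 0"
  unfolding arrangement_weight_def
proof (rule prod_pos)
  fix k assume k: "k \<in> {..<length ts}"
  then have "ts ! k \<in> set ts" by simp
  then have "ts ! k < n" using assms(1) unfolding arrangements_def by blast
  moreover have "i + k < n" using k assms(1) unfolding arrangements_def by auto
  ultimately show "a (ts ! k) (i + k) > 0" using assms(2) by simp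
qed

lemma row_form_Suc_upd:
  "row_form a (Suc i) r (x(i := t)) = row_form a i r x + of_real (a r i) * t"
proof -
  have "(\<Sum>j<i. of_real (a r j) * (x(i := t)) j) = row_form a i r x"
    unfolding row_form_def by (rule sum.cong) auto
  then show ?thesis unfolding row_form_def[of a "Suc i"] by simp
qed

lemma poly_deriv_prod_poly:
  "poly (deriv_prod_poly a n i x) t = deriv_prod a n (Suc i) (x(i := t))"
  unfolding deriv_prod_poly_def deriv_prod_def poly_sum poly_prod poly_mult row_form_Suc_upd
  by (simp add: mult.commute)

lemma coeff_1_deriv_prod_poly:
  assumes "i < n"
  shows "coeff (deriv_prod_poly a n i x) 1 = deriv_prod a n i x"
proof -
  have "coeff (deriv_prod_poly a n i x) 1 = (\<Sum>ts\<in>arrangements n (n - Suc i).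
      of_real (arrangement_weight a (Suc i) ts) *
      (\<Sum>r\<in>{..<n} - set ts. of_real (a r i) * (\<Prod>s\<in>{..<n} - set ts - {r}. row_form a i s x)))"
    unfolding deriv_prod_poly_def coeff_sum
    using coeff_1_prod_linear[of "{..<n} - set _" "\<lambda>r. row_form a i r x" "\<lambda>r. of_real (a r i)"] by simp
  also have "\<dots> = (\<Sum>ts\<in>arrangements n (n - Suc i). \<Sum>r\<in>{..<n} - set ts.
      of_real (arrangement_weight a i (r # ts)) * (\<Prod>s\<in>{..<n} - set (r # ts). row_form a i s x))"
  proof -
    have "{..<n} - set (r # ts) = {..<n} - set ts - {r}" for r ts by auto
    then show ?thesis by (simp add: arrangement_weight_Cons sum_distrib_left mult_ac)
  qed
  also have "\<dots> = deriv_prod a n i x"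
  proof -
    have n_i: "n - i = Suc (n - Suc i)" using assms by simp
    show ?thesis unfolding deriv_prod_def n_i sum_arrangements_Suc ..
  qed
  finally show ?thesis .
qed

lemma degree_coeff_deriv_prod_poly:
  assumes "i < n"
  shows "degree (deriv_prod_poly a n i x) \<le> Suc i"
    and "coeff (deriv_prod_poly a n i x) (Suc i) = of_real (\<Sum>ts\<in>arrangements n (n - Suc i).
           arrangement_weight a (Suc i) ts * (\<Prod>r\<in>{..<n} - set ts. a r i))"
proof -
  let ?Q = "\<lambda>ts. \<Prod>r\<in>{..<n} - set ts. [:row_form a i r x, of_real (a r i):]"
  have top: "degree (?Q ts) \<le> Suc i \<and> coeff (?Q ts) (Suc i) = (\<Prod>r\<in>{..<n} - set ts. of_real (a r i))"
    if "ts \<in> arrangements n (n - Suc i)" for ts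
    using degree_coeff_prod_linear[of "{..<n} - set ts" "\<lambda>r. row_form a i r x" "\<lambda>r. of_real (a r i)"]
      card_diff_arrangement[OF that] assms by simp
  show "degree (deriv_prod_poly a n i x) \<le> Suc i"
    unfolding deriv_prod_poly_def
    by (rule degree_sum_le) (auto intro: order.trans[OF degree_mult_le] simp: top finite_arrangements)
  show "coeff (deriv_prod_poly a n i x) (Suc i) = of_real (\<Sum>ts\<in>arrangements n (n - Suc i).
      arrangement_weight a (Suc i) ts * (\<Prod>r\<in>{..<n} - set ts. a r i))"
    unfolding deriv_prod_poly_def coeff_sum of_real_sum
    by (intro sum.cong refl) (simp add: top of_real_prod)
qed

lemma deriv_prod_poly_degree_lead:
  assumes "i < n" and pos: "\<forall>r<n. \<forall>c. i \<le> c \<and> c < n \<longrightarrow> a r c > 0"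
  shows "degree (deriv_prod_poly a n i x) = Suc i \<and>
    (\<exists>S>0. lead_coeff (deriv_prod_poly a n i x) = of_real S)"
proof -
  define S where "S = (\<Sum>ts\<in>arrangements n (n - Suc i).
    arrangement_weight a (Suc i) ts * (\<Prod>r\<in>{..<n} - set ts. a r i))"
  have "S > 0"
    unfolding S_def using assms upt_in_arrangements[of "n - Suc i" n]
    by (intro sum_pos finite_arrangements mult_pos_pos arrangement_weight_pos prod_pos) auto
  then show ?thesis
    using degree_coeff_deriv_prod_poly[OF assms(1), of a x] unfolding S_def[symmetric]
    by (metis le_antisym le_degree of_real_eq_0_iff order.irrefl)
qed

lemma deriv_prod_homogeneous:
  assumes "i \<le> n"
  shows "deriv_prod a n i (\<lambda>j. c * x j) = c ^ i * deriv_prod a n i x"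
  unfolding deriv_prod_def sum_distrib_left
proof (rule sum.cong[OF refl])
  fix ts assume ts: "ts \<in> arrangements n (n - i)"
  have "row_form a i r (\<lambda>j. c * x j) = c * row_form a i r x" for r
    unfolding row_form_def by (simp add: sum_distrib_left mult.left_commute)
  then have "(\<Prod>r\<in>{..<n} - set ts. row_form a i r (\<lambda>j. c * x j))
      = c ^ card ({..<n} - set ts) * (\<Prod>r\<in>{..<n} - set ts. row_form a i r x)"
    by (simp add: prod.distrib)
  also have "card ({..<n} - set ts) = i" using card_diff_arrangement[OF ts] assms by simp
  finally show "of_real (arrangement_weight a i ts) * (\<Prod>r\<in>{..<n} - set ts. row_form a i r (\<lambda>j. c * x j)) =
      c ^ i * (of_real (arrangement_weight a i ts) * (\<Prod>r\<in>{..<n} - set ts. row_form a i r x))"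
    by (simp add: mult_ac)
qed

lemma deriv_prod_of_real:
  "deriv_prod a n i (\<lambda>j. of_real (y j)) = (of_real (deriv_prod a n i y) :: 'a::real_normed_field)"
  unfolding deriv_prod_def row_form_def by (simp add: of_real_sum of_real_prod)

lemma poly_deriv_prod_poly_of_real:
  "poly (deriv_prod_poly a n i (\<lambda>j. complex_of_real (y j))) (of_real t)
    = of_real (deriv_prod a n (Suc i) (y(i := t)))"
proof -
  have "(\<lambda>j. complex_of_real (y j))(i := of_real t) = (\<lambda>j. of_real ((y(i := t)) j))" by auto
  then show ?thesis unfolding poly_deriv_prod_poly by (simp only: deriv_prod_of_real)
qed

definition zero_column :: "(nat \<Rightarrow> nat \<Rightarrow> real) \<Rightarrow> nat \<Rightarrow> nat \<Rightarrow> nat \<Rightarrow> real" where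
  "zero_column a c = (\<lambda>r c'. if c' = c then 0 else a r c')"

lemma deriv_prod_zero_column:
  "deriv_prod (zero_column a i) n (Suc i) x = deriv_prod a n (Suc i) (x(i := 0))"
proof -
  have "arrangement_weight (zero_column a i) (Suc i) ts = arrangement_weight a (Suc i) ts" for ts
    unfolding arrangement_weight_def zero_column_def by (intro prod.cong) auto
  moreover have "row_form (zero_column a i) (Suc i) r x = row_form a (Suc i) r (x(i := 0))" for r
    unfolding row_form_def zero_column_def by (intro sum.cong) auto
  ultimately show ?thesis unfolding deriv_prod_def by simp
qed

lemma deriv_prod_top: "deriv_prod a n n x = (\<Prod>r<n. row_form a n r x)"
proof -
  have "arrangements n 0 = {[]}" unfolding arrangements_def by auto
  then show ?thesis unfolding deriv_prod_def by (simp add: arrangement_weight_def)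
qed

lemma deriv_prod_bottom: "deriv_prod a n 0 x = of_real (permanent n a)"
proof -
  have "arrangement_weight a 0 ts = (\<Prod>c<n. a (ts ! c) c)" if "ts \<in> arrangements n n" for ts
    using that unfolding arrangement_weight_def arrangements_def by simp
  then show ?thesis
    unfolding deriv_prod_def permanent_def of_real_sum by (simp add: set_arrangement_full)
qed

lemma deriv_prod_bottom_eq_deriv_prod_1:
  assumes "0 < n"
  shows "deriv_prod a n 0 y = deriv_prod a n 1 (y(0 := 1))"
proof -
  let ?P = "deriv_prod_poly a n 0 y"
  have "coeff ?P 0 = deriv_prod a n 1 (y(0 := 0))"
    using poly_deriv_prod_poly[of a n 0 y 0] by (simp add: poly_0_coeff_0)
  also have "\<dots> = 0"
  proof (unfold deriv_prod_def, intro sum.neutral ballI)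
    fix ts assume ts: "ts \<in> arrangements n (n - 1)"
    then obtain r where "{..<n} - set ts = {r}"
      using card_diff_arrangement[OF ts] assms by (auto simp: card_1_singleton_iff)
    then show "of_real (arrangement_weight a 1 ts) * (\<Prod>r\<in>{..<n} - set ts. row_form a 1 r (y(0 := 0))) = 0"
      by (simp add: row_form_def)
  qed
  finally have "coeff ?P 0 = 0" .
  moreover have "poly ?P 1 = coeff ?P 0 + coeff ?P 1"
    using degree_coeff_deriv_prod_poly(1)[OF assms, of a y]
    by (cases "degree ?P") (auto simp: poly_altdef coeff_eq_0)
  ultimately show ?thesis
    using poly_deriv_prod_poly[of a n 0 y 1] coeff_1_deriv_prod_poly[OF assms, of a y] by simp
qed

lemma deriv_prod_pos:
  fixes y :: "nat \<Rightarrow> real"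
  assumes pos: "\<forall>r c. a r c > 0" and "0 < i" "i \<le> n" and y: "y 0 > 0" "\<forall>j<i. y j \<ge> 0"
  shows "deriv_prod a n i y > 0"
  unfolding deriv_prod_def
proof (rule sum_pos[OF finite_arrangements])
  show "arrangements n (n - i) \<noteq> {}" using upt_in_arrangements[of "n - i" n] by auto
  fix ts assume ts: "ts \<in> arrangements n (n - i)"
  have "row_form a i r y > 0" for r
  proof -
    have "a r 0 * y 0 \<le> row_form a i r y"
      unfolding row_form_def of_real_eq_id id_apply
      using pos y \<open>0 < i\<close> by (intro member_le_sum) (auto simp: less_imp_le)
    moreover have "a r 0 * y 0 > 0" using pos y by simp
    ultimately show ?thesis by linarith
  qed
  moreover have "arrangement_weight a i ts > 0" using pos by (intro arrangement_weight_pos[OF ts]) auto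
  ultimately show "of_real (arrangement_weight a i ts) * (\<Prod>r\<in>{..<n} - set ts. row_form a i r y) > 0"
    by (simp add: prod_pos)
qed

section \<open>Stability in the right half-plane\<close>

definition rhp_stable :: "(nat \<Rightarrow> nat \<Rightarrow> real) \<Rightarrow> nat \<Rightarrow> nat \<Rightarrow> bool" where
  "rhp_stable a n i \<longleftrightarrow> (\<forall>z::nat \<Rightarrow> complex. (\<forall>j<i. Re (z j) > 0) \<longrightarrow> deriv_prod a n i z \<noteq> 0)"

lemma rhp_stableD: "rhp_stable a n i \<Longrightarrow> \<forall>j<i. Re (z j) > 0 \<Longrightarrow> deriv_prod a n i z \<noteq> 0"
  unfolding rhp_stable_def by blast

lemma ex_rotation_into_right_half_plane:
  fixes z :: "nat \<Rightarrow> complex"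
  assumes z: "\<forall>j<i. Re (z j) > 0" and w: "Re w \<ge> 0" "w \<noteq> 0"
  shows "\<exists>l. Re (l * w) > 0 \<and> (\<forall>j<i. Re (l * z j) > 0)"
proof (cases "Re w > 0")
  case True
  then show ?thesis using z by (intro exI[of _ 1]) simp
next
  case False
  define v where "v = Im w"
  have w_eq: "w = \<i> * of_real v" using w False unfolding v_def by (simp add: complex_eq_iff)
  then have "v \<noteq> 0" using w by auto
  have "\<forall>\<^sub>F \<epsilon> in at_right 0. \<forall>j\<in>{..<i}. Re (z j) + \<epsilon> * (v * Im (z j)) > 0"
    using z by (intro eventually_ball_finite ballI order_tendstoD(1)) (auto intro!: tendsto_eq_intros)
  then have "\<forall>\<^sub>F \<epsilon> in at_right 0. \<epsilon> > 0 \<and> (\<forall>j\<in>{..<i}. Re (z j) + \<epsilon> * (v * Im (z j)) > 0)"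
    using eventually_at_right_less by (rule eventually_conj[rotated])
  then obtain \<epsilon> :: real where "\<epsilon> > 0 \<and> (\<forall>j\<in>{..<i}. Re (z j) + \<epsilon> * (v * Im (z j)) > 0)"
    using eventually_happens'[OF trivial_limit_at_right_real] by blast
  then have \<epsilon>: "\<epsilon> > 0" "\<forall>j<i. Re (z j) + \<epsilon> * (v * Im (z j)) > 0" by auto
  have "Re ((1 - \<i> * of_real (\<epsilon> * v)) * w) = \<epsilon> * (v * v)" unfolding w_eq by simp
  moreover have "\<epsilon> * (v * v) > 0"
    using \<epsilon>(1) \<open>v \<noteq> 0\<close> not_real_square_gt_zero by (blast intro: mult_pos_pos)
  ultimately show ?thesis using \<epsilon>(2) by (intro exI[of _ "1 - \<i> * of_real (\<epsilon> * v)"]) (simp add: algebra_simps)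
qed

lemma ex_rotation_of_nonreal:
  fixes z :: "nat \<Rightarrow> complex"
  assumes z: "\<forall>j<i. Im (z j) = 0 \<and> Re (z j) > 0" and w: "Im w \<noteq> 0"
  shows "\<exists>l. Re (l * w) > 0 \<and> (\<forall>j<i. Re (l * z j) > 0)"
proof -
  define v where "v = Im w"
  define \<epsilon> where "\<epsilon> = (\<bar>Re w\<bar> + 1) / (v * v)"
  have "Re ((1 - \<i> * of_real (\<epsilon> * v)) * w) = Re w + \<epsilon> * (v * v)"
    unfolding v_def by (simp add: algebra_simps)
  also have "\<epsilon> * (v * v) = \<bar>Re w\<bar> + 1" using w unfolding \<epsilon>_def v_def by simp
  finally have "Re ((1 - \<i> * of_real (\<epsilon> * v)) * w) > 0" by simp
  moreover have "Re ((1 - \<i> * of_real (\<epsilon> * v)) * z j) = Re (z j)" if "j < i" for j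
    using z that by simp
  ultimately show ?thesis using z by (intro exI[of _ "1 - \<i> * of_real (\<epsilon> * v)"]) simp
qed

text \<open>By homogeneity, multiplying all arguments by a common factor \<open>l\<close> preserves zeros.\<close>
lemma deriv_prod_poly_root_no_rotation:
  assumes "rhp_stable a n (Suc i)" "i < n" "poly (deriv_prod_poly a n i z) r = 0"
  shows "\<not> (Re (l * r) > 0 \<and> (\<forall>j<i. Re (l * z j) > 0))"
proof
  assume l: "Re (l * r) > 0 \<and> (\<forall>j<i. Re (l * z j) > 0)"
  then have "\<forall>j<Suc i. Re (l * (z(i := r)) j) > 0" by (simp add: less_Suc_eq)
  then have "deriv_prod a n (Suc i) (\<lambda>j. l * (z(i := r)) j) \<noteq> 0"
    by (rule rhp_stableD[OF assms(1)])
  moreover have "deriv_prod a n (Suc i) (\<lambda>j. l * (z(i := r)) j) = l ^ Suc i * deriv_prod a n (Suc i) (z(i := r))"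
    using assms(2) by (intro deriv_prod_homogeneous) simp
  ultimately show False using assms(3) by (simp add: poly_deriv_prod_poly)
qed

text \<open>Invariant of the downward induction proving stability. It must survive \<open>zero_column b i\<close>
  because setting \<open>x\<^sub>i = 0\<close> in \<open>deriv_prod b n (Suc i)\<close> yields
  \<open>deriv_prod (zero_column b i) n (Suc i)\<close>.\<close>
definition admissible :: "nat \<Rightarrow> nat \<Rightarrow> (nat \<Rightarrow> nat \<Rightarrow> real) \<Rightarrow> bool" where
  "admissible n i b \<longleftrightarrow> (\<forall>r c. b r c \<ge> 0) \<and> (\<forall>r<n. \<exists>j<i. b r j > 0) \<and>
     (\<forall>r<n. \<forall>c. i \<le> c \<and> c < n \<longrightarrow> b r c > 0)"

lemma admissible_Suc: "admissible n i b \<Longrightarrow> admissible n (Suc i) b"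
  unfolding admissible_def by (meson Suc_leD less_SucI)

lemma admissible_zero_column:
  assumes "admissible n i b"
  shows "admissible n (Suc i) (zero_column b i)"
proof -
  have "\<exists>j<Suc i. zero_column b i r j > 0" if r: "r < n" for r
  proof -
    obtain j where "j < i" "b r j > 0" using assms r unfolding admissible_def by blast
    then show ?thesis unfolding zero_column_def by (intro exI[of _ j]) auto
  qed
  then show ?thesis using assms unfolding admissible_def zero_column_def by auto
qed

lemma rhp_stable_top:
  assumes "admissible n n b"
  shows "rhp_stable b n n"
  unfolding rhp_stable_def deriv_prod_top
proof (intro allI impI)
  fix z :: "nat \<Rightarrow> complex" assume z: "\<forall>j<n. Re (z j) > 0"
  have "Re (row_form b n r z) > 0" if r: "r < n" for r
  proof -
    obtain j where j: "j < n" "b r j > 0" using assms r unfolding admissible_def by blast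
    show ?thesis
      unfolding row_form_def Re_sum
      using assms z j unfolding admissible_def by (intro sum_pos2[of _ j]) (auto simp: less_imp_le)
  qed
  then show "(\<Prod>r<n. row_form b n r z) \<noteq> 0" by fastforce
qed

lemma rhp_stable_step:
  assumes "i < n" and adm: "admissible n i b"
    and st: "rhp_stable b n (Suc i)" and st0: "rhp_stable (zero_column b i) n (Suc i)"
  shows "rhp_stable b n i"
  unfolding rhp_stable_def
proof (intro allI impI)
  fix z :: "nat \<Rightarrow> complex" assume z: "\<forall>j<i. Re (z j) > 0"
  define P where "P = deriv_prod_poly b n i z"
  have "coeff P 0 = deriv_prod (zero_column b i) n (Suc i) (z(i := 1))"
    unfolding P_def using poly_deriv_prod_poly[of b n i z 0]
    by (simp add: poly_0_coeff_0 deriv_prod_zero_column)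
  moreover have "\<forall>j<Suc i. Re ((z(i := 1)) j) > 0" using z by simp
  ultimately have P0: "coeff P 0 \<noteq> 0" using rhp_stableD[OF st0] by simp
  have "Re r < 0" if r: "poly P r = 0" for r
  proof (rule ccontr)
    assume "\<not> Re r < 0"
    moreover have "r \<noteq> 0" using r P0 by (auto simp: poly_0_coeff_0)
    ultimately obtain l where "Re (l * r) > 0 \<and> (\<forall>j<i. Re (l * z j) > 0)"
      using ex_rotation_into_right_half_plane[OF z, of r] by force
    then show False using deriv_prod_poly_root_no_rotation[OF st \<open>i < n\<close> r[unfolded P_def]] by blast
  qed
  moreover have "degree P = Suc i"
    using deriv_prod_poly_degree_lead[OF \<open>i < n\<close>] adm unfolding P_def admissible_def by blast
  ultimately have "Re (coeff P 1 / coeff P 0) > 0" by (intro Re_coeff_1_div_coeff_0_pos) auto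
  then show "deriv_prod b n i z \<noteq> 0"
    unfolding P_def coeff_1_deriv_prod_poly[OF \<open>i < n\<close>] by auto
qed

lemma rhp_stable_if_admissible:
  "i \<le> n \<Longrightarrow> admissible n i b \<Longrightarrow> rhp_stable b n i"
proof (induction "n - i" arbitrary: i b)
  case 0
  then show ?case using rhp_stable_top by simp
next
  case (Suc k)
  then have k: "k = n - Suc i" "Suc i \<le> n" by auto
  show ?case
  proof (rule rhp_stable_step)
    show "rhp_stable b n (Suc i)"
      by (rule Suc.hyps(1)[OF k admissible_Suc[OF Suc.prems(2)]])
    show "rhp_stable (zero_column b i) n (Suc i)"
      by (rule Suc.hyps(1)[OF k admissible_zero_column[OF Suc.prems(2)]])
  qed (use k Suc.prems(2) in auto)
qed

lemma rhp_stable_pos: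
  assumes "\<forall>r c. a r c > 0" "0 < i" "i \<le> n"
  shows "rhp_stable a n i"
  using assms by (intro rhp_stable_if_admissible) (auto simp: admissible_def less_imp_le)

lemma deriv_prod_poly_negative_roots:
  assumes pos: "\<forall>r c. a r c > 0" and "0 < i" "i < n" and y: "\<forall>j<i. y j > 0"
    and r: "poly (deriv_prod_poly a n i (\<lambda>j. complex_of_real (y j))) r = 0"
  shows "Im r = 0 \<and> Re r < 0"
proof -
  have "rhp_stable a n (Suc i)" using pos \<open>i < n\<close> by (intro rhp_stable_pos) auto
  note no_rotation = deriv_prod_poly_root_no_rotation[OF this \<open>i < n\<close> r]
  have "Im r = 0" using ex_rotation_of_nonreal[of i "\<lambda>j. of_real (y j)" r] y no_rotation by auto
  moreover have "\<not> Re r > 0" using no_rotation[of 1] y by auto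
  moreover have "deriv_prod a n (Suc i) (y(i := 0)) > 0"
    using assms by (intro deriv_prod_pos) (auto simp: less_Suc_eq less_imp_le)
  then have "r \<noteq> 0" using r poly_deriv_prod_poly_of_real[of a n i y 0] by auto
  ultimately show ?thesis by (auto simp: complex_eq_iff)
qed

section \<open>Capacity and the permanent\<close>

lemma deriv_prod_top_ge_prod:
  fixes y :: "nat \<Rightarrow> real"
  assumes ds: "doubly_stochastic n a" and y: "\<forall>j<n. y j > 0"
  shows "(\<Prod>j<n. y j) \<le> deriv_prod a n n y"
proof -
  have nonneg: "\<forall>r c. a r c \<ge> 0" and rows: "\<forall>r<n. (\<Sum>j<n. a r j) = 1"
    and cols: "\<forall>j<n. (\<Sum>r<n. a r j) = 1"
    using ds unfolding doubly_stochastic_def by auto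
  have row: "exp (\<Sum>j<n. a r j * ln (y j)) \<le> row_form a n r y" if r: "r < n" for r
  proof -
    have "(\<Sum>j<n. a r j * ln (y j)) \<le> ln (\<Sum>j<n. a r j *\<^sub>R y j)"
      by (rule concave_on_sum[OF _ _ ln_concave]) (use rows r nonneg y in \<open>auto simp: lessThan_empty_iff\<close>)
    moreover have "Min (y ` {..<n}) \<le> (\<Sum>j<n. a r j *\<^sub>R y j)"
    proof -
      have "Min (y ` {..<n}) = (\<Sum>j<n. a r j * Min (y ` {..<n}))"
        using rows r by (simp add: sum_distrib_right[symmetric])
      also have "\<dots> \<le> (\<Sum>j<n. a r j *\<^sub>R y j)"
        using nonneg by (intro sum_mono) (auto intro!: mult_left_mono)
      finally show ?thesis .
    qed
    moreover have "Min (y ` {..<n}) > 0" using y r by (subst Min_gr_iff) auto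
    ultimately show ?thesis unfolding row_form_def by (simp add: ln_ge_iff)
  qed
  have "(\<Prod>j<n. y j) = exp (\<Sum>j<n. ln (y j))" using y by (simp add: exp_sum)
  also have "(\<Sum>j<n. ln (y j)) = (\<Sum>r<n. \<Sum>j<n. a r j * ln (y j))"
    by (subst sum.swap) (simp add: sum_distrib_right[symmetric] cols)
  also have "exp \<dots> = (\<Prod>r<n. exp (\<Sum>j<n. a r j * ln (y j)))" by (simp add: exp_sum)
  also have "\<dots> \<le> (\<Prod>r<n. row_form a n r y)" by (intro prod_mono) (use row in auto)
  finally show ?thesis unfolding deriv_prod_top .
qed

lemma deriv_prod_capacity_step:
  fixes y :: "nat \<Rightarrow> real"
  assumes pos: "\<forall>r c. a r c > 0" and "i < n" and "c \<ge> 0"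
    and cap: "\<forall>y. (\<forall>j<Suc i. y j > 0) \<longrightarrow> c * (\<Prod>j<Suc i. y j) \<le> deriv_prod a n (Suc i) y"
    and y: "\<forall>j<i. y j > 0"
  shows "c / exp 1 * (\<Prod>j<i. y j) \<le> deriv_prod a n i y"
proof -
  have cap_t: "c * (\<Prod>j<i. y j) * t \<le> deriv_prod a n (Suc i) (y(i := t))" if "t > 0" for t
  proof -
    have "(\<Prod>j<i. (y(i := t)) j) = (\<Prod>j<i. y j)" by (intro prod.cong) auto
    then have "(\<Prod>j<Suc i. (y(i := t)) j) = (\<Prod>j<i. y j) * t" by simp
    moreover have "\<forall>j<Suc i. (y(i := t)) j > 0" using y that by (simp add: less_Suc_eq)
    ultimately show ?thesis using cap by (metis mult.assoc)
  qed
  show ?thesis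
  proof (cases "i = 0")
    case True
    then have "deriv_prod a n i y = deriv_prod a n 1 (y(0 := 1))"
      using deriv_prod_bottom_eq_deriv_prod_1 \<open>i < n\<close> by simp
    moreover have "c / exp 1 \<le> c" using divide_left_mono[of 1 "exp 1" c] \<open>c \<ge> 0\<close> by simp
    ultimately show ?thesis using cap_t[of 1] True by simp
  next
    case False
    define P where "P = deriv_prod_poly a n i (\<lambda>j. complex_of_real (y j))"
    note poly_P = poly_deriv_prod_poly_of_real[of a n i y, folded P_def]
    have roots: "Im r = 0 \<and> Re r < 0" if "poly P r = 0" for r
      using deriv_prod_poly_negative_roots[OF pos _ \<open>i < n\<close> y] False that unfolding P_def by blast
    obtain S where "degree P = Suc i" "S > 0" "lead_coeff P = of_real S"
      using deriv_prod_poly_degree_lead[OF \<open>i < n\<close>] pos unfolding P_def by blast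
    then have "c * (\<Prod>j<i. y j) / exp 1 \<le> Re (coeff P 1)"
      using roots cap_t poly_P by (intro coeff_1_ge_of_negative_real_roots) auto
    moreover have "coeff P 1 = of_real (deriv_prod a n i y)"
      unfolding P_def coeff_1_deriv_prod_poly[OF \<open>i < n\<close>] by (rule deriv_prod_of_real)
    ultimately show ?thesis by simp
  qed
qed

lemma deriv_prod_capacity:
  fixes y :: "nat \<Rightarrow> real"
  assumes pos: "\<forall>r c. a r c > 0" and ds: "doubly_stochastic n a" and "i \<le> n" and "\<forall>j<i. y j > 0"
  shows "exp (- real (n - i)) * (\<Prod>j<i. y j) \<le> deriv_prod a n i y"
  using assms(3,4)
proof (induction "n - i" arbitrary: i y)
  case 0
  then show ?case using deriv_prod_top_ge_prod[OF ds] by simp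
next
  case (Suc k)
  then have "i < n" and k: "k = n - Suc i" by auto
  have "\<forall>y. (\<forall>j<Suc i. y j > 0) \<longrightarrow> exp (- real k) * (\<Prod>j<Suc i. y j) \<le> deriv_prod a n (Suc i) y"
    using Suc.hyps(1)[of "Suc i"] k \<open>i < n\<close> by auto
  then have "exp (- real k) / exp 1 * (\<Prod>j<i. y j) \<le> deriv_prod a n i y"
    by (intro deriv_prod_capacity_step[OF pos \<open>i < n\<close>] Suc.prems) simp
  moreover have "exp (- real k) / exp 1 = exp (- real (n - i))"
    using Suc.hyps(2) by (simp add: exp_diff[symmetric])
  ultimately show ?case by simp
qed

lemma permanent_ge_exp_pos:
  assumes "\<forall>r c. a r c > 0" and "doubly_stochastic n a"
  shows "exp (- real n) \<le> permanent n a"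
  using deriv_prod_capacity[OF assms, of 0 "\<lambda>_. 1"] by (simp add: deriv_prod_bottom)

text \<open>The weak form \<open>e\<^sup>-\<^sup>n\<close> of van der Waerden's bound \<open>n!/n\<^sup>n\<close>.\<close>
theorem permanent_doubly_stochastic_ge:
  assumes ds: "doubly_stochastic n a" and n: "n \<ge> 1"
  shows "exp (- real n) \<le> permanent n a"
proof -
  define b where "b = (\<lambda>\<epsilon>::real. \<lambda>r c. (1 - \<epsilon>) * a r c + \<epsilon> / real n)"
  have "exp (- real n) \<le> permanent n (b \<epsilon>)" if "0 < \<epsilon>" "\<epsilon> < 1" for \<epsilon>
  proof (rule permanent_ge_exp_pos)
    show "\<forall>r c. b \<epsilon> r c > 0"
      unfolding b_def using that ds n unfolding doubly_stochastic_def
      by (auto intro!: add_nonneg_pos)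
    show "doubly_stochastic n (b \<epsilon>)"
      unfolding b_def using that ds n unfolding doubly_stochastic_def
      by (simp add: sum.distrib sum_distrib_left[symmetric])
  qed
  then have "\<forall>\<^sub>F \<epsilon> in at_right 0. exp (- real n) \<le> permanent n (b \<epsilon>)"
    unfolding eventually_at_right_field by (intro exI[of _ 1]) auto
  moreover have "((\<lambda>\<epsilon>. permanent n (b \<epsilon>)) \<longlongrightarrow> permanent n (b 0)) (at_right 0)"
    unfolding permanent_def b_def using n by (intro tendsto_intros) auto
  ultimately have "exp (- real n) \<le> permanent n (b 0)"
    by (intro tendsto_lowerbound) auto
  moreover have "b 0 = a" unfolding b_def by auto
  ultimately show ?thesis by simp
qed

section \<open>Perfect matchings of regular bipartite graphs\<close>

lemma card_filter_bij_betw: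
  assumes "bij_betw f {..<m} B" and "{y. P y} \<subseteq> B"
  shows "card {j\<in>{..<m}. P (f j)} = card {y. P y}"
proof (rule bij_betw_same_card, rule bij_betw_subset[OF assms(1)])
  show "f ` {j\<in>{..<m}. P (f j)} = {y. P y}"
    using assms by (auto simp: bij_betw_def)
qed auto

lemma biadjacency_doubly_stochastic:
  assumes reg: "bip_regular A B E k" and "k \<ge> 1"
    and \<alpha>: "bij_betw \<alpha> {..<m} A" and \<beta>: "bij_betw \<beta> {..<m} B"
  shows "doubly_stochastic m (\<lambda>r c. if r < m \<and> c < m \<and> (\<alpha> r, \<beta> c) \<in> E then 1 / real k else 0)"
proof -
  have E: "E \<subseteq> A \<times> B" and deg_A: "\<forall>x\<in>A. bip_deg_A E x = k" and deg_B: "\<forall>y\<in>B. bip_deg_B E y = k"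
    using reg unfolding bip_regular_def bip_graph_def by auto
  have "(\<Sum>c<m. if r < m \<and> c < m \<and> (\<alpha> r, \<beta> c) \<in> E then 1 / real k else 0) = 1" if r: "r < m" for r
  proof -
    have "card {c\<in>{..<m}. (\<alpha> r, \<beta> c) \<in> E} = bip_deg_A E (\<alpha> r)"
      unfolding bip_deg_A_def using E by (intro card_filter_bij_betw[OF \<beta>]) auto
    also have "\<dots> = k" using deg_A \<alpha> r by (auto simp: bij_betw_def)
    finally show ?thesis using r \<open>k \<ge> 1\<close> by (simp add: sum.inter_filter[symmetric])
  qed
  moreover have "(\<Sum>r<m. if r < m \<and> c < m \<and> (\<alpha> r, \<beta> c) \<in> E then 1 / real k else 0) = 1" if c: "c < m" for c
  proof -
    have "card {r\<in>{..<m}. (\<alpha> r, \<beta> c) \<in> E} = bip_deg_B E (\<beta> c)"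
      unfolding bip_deg_B_def using E by (intro card_filter_bij_betw[OF \<alpha>]) auto
    also have "\<dots> = k" using deg_B \<beta> c by (auto simp: bij_betw_def)
    finally show ?thesis using c \<open>k \<ge> 1\<close> by (simp add: sum.inter_filter[symmetric])
  qed
  ultimately show ?thesis unfolding doubly_stochastic_def by auto
qed

lemma permanent_indicator:
  "permanent n (\<lambda>r c. if P r c then s else 0) = s ^ n * card {ts\<in>arrangements n n. \<forall>c<n. P (ts ! c) c}"
proof -
  have "(\<Prod>c<n. if P (ts ! c) c then s else 0) = (if \<forall>c<n. P (ts ! c) c then s ^ n else 0)" for ts
    by (auto simp: prod_zero_iff)
  then show ?thesis
    unfolding permanent_def by (simp add: sum.inter_filter[symmetric] finite_arrangements)
qed

lemma perfect_matching_image: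
  assumes f: "bij_betw f I A" and g: "bij_betw g I B" and "\<forall>i\<in>I. (f i, g i) \<in> E"
  shows "perfect_matching A B E ((\<lambda>i. (f i, g i)) ` I)"
  unfolding perfect_matching_def
proof (intro conjI ballI)
  show "(\<lambda>i. (f i, g i)) ` I \<subseteq> E" using assms(3) by auto
next
  fix a assume "a \<in> A"
  then obtain i where i: "i \<in> I" "a = f i" using f by (auto simp: bij_betw_def)
  show "\<exists>!b. (a, b) \<in> (\<lambda>i. (f i, g i)) ` I"
    using f i by (intro ex1I[of _ "g i"]) (auto simp: bij_betw_def inj_on_def)
next
  fix b assume "b \<in> B"
  then obtain i where i: "i \<in> I" "b = g i" using g by (auto simp: bij_betw_def)
  show "\<exists>!a. (a, b) \<in> (\<lambda>i. (f i, g i)) ` I"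
    using g i by (intro ex1I[of _ "f i"]) (auto simp: bij_betw_def inj_on_def)
qed

lemma finite_perfect_matchings: "finite E \<Longrightarrow> finite {M. perfect_matching A B E M}"
  by (rule finite_subset[of _ "Pow E"]) (auto simp: perfect_matching_def)

lemma card_edge_arrangements_le:
  assumes "finite E" and \<alpha>: "bij_betw \<alpha> {..<m} A" and \<beta>: "bij_betw \<beta> {..<m} B"
  shows "card {ts\<in>arrangements m m. \<forall>c<m. (\<alpha> (ts ! c), \<beta> c) \<in> E} \<le> card {M. perfect_matching A B E M}"
proof -
  define G where "G = {ts\<in>arrangements m m. \<forall>c<m. (\<alpha> (ts ! c), \<beta> c) \<in> E}"
  define matching where "matching ts = (\<lambda>c. (\<alpha> (ts ! c), \<beta> c)) ` {..<m}" for ts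
  have nth_lt: "ts ! c < m" if "ts \<in> G" "c < m" for ts c
    using that set_arrangement_full[of ts m] unfolding G_def arrangements_def by (auto dest: nth_mem)
  have "perfect_matching A B E (matching ts)" if ts: "ts \<in> G" for ts
  proof -
    have "bij_betw ((!) ts) {..<m} {..<m}"
      using ts set_arrangement_full[of ts m] unfolding G_def arrangements_def by (auto intro: bij_betw_nth)
    then have "bij_betw (\<lambda>c. \<alpha> (ts ! c)) {..<m} A"
      using bij_betw_trans[OF _ \<alpha>] by (simp add: comp_def)
    then show ?thesis
      unfolding matching_def using perfect_matching_image[OF _ \<beta>] ts unfolding G_def by blast
  qed
  moreover have "inj_on matching G"
  proof (rule inj_onI)
    fix ts ts' assume ts: "ts \<in> G" and ts': "ts' \<in> G" and eq: "matching ts = matching ts'"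
    show "ts = ts'"
    proof (rule nth_equalityI)
      show len: "length ts = length ts'" using ts ts' unfolding G_def arrangements_def by simp
      fix c assume "c < length ts"
      then have c: "c < m" using ts unfolding G_def arrangements_def by simp
      then have "(\<alpha> (ts ! c), \<beta> c) \<in> matching ts'" using eq unfolding matching_def by auto
      then obtain c' where c': "c' < m" "\<alpha> (ts ! c) = \<alpha> (ts' ! c')" "\<beta> c = \<beta> c'"
        unfolding matching_def by auto
      then have "c' = c" using \<beta> c by (auto simp: bij_betw_def inj_on_def)
      then show "ts ! c = ts' ! c"
        using c' \<alpha> nth_lt[OF ts c] nth_lt[OF ts' c] by (auto simp: bij_betw_def inj_on_def)
    qed
  qed
  ultimately show ?thesis
    unfolding G_def[symmetric]
    by (intro card_inj_on_le finite_perfect_matchings \<open>finite E\<close>) auto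
qed

lemma finite_bip_edges: "bip_graph A B E \<Longrightarrow> finite E"
  unfolding bip_graph_def by (meson finite_SigmaI finite_subset)

theorem card_perfect_matchings_ge:
  assumes reg: "bip_regular A B E k" and "k \<ge> 1" and "card A = m" "card B = m" "m \<ge> 1"
  shows "real k ^ m * exp (- real m) \<le> card {M. perfect_matching A B E M}"
proof -
  have "finite A" "finite B" "finite E"
    using reg finite_bip_edges unfolding bip_regular_def bip_graph_def by auto
  obtain \<alpha> where \<alpha>: "bij_betw \<alpha> {..<m} A"
    using ex_bij_betw_nat_finite[OF \<open>finite A\<close>] \<open>card A = m\<close> atLeast0LessThan by auto
  obtain \<beta> where \<beta>: "bij_betw \<beta> {..<m} B"
    using ex_bij_betw_nat_finite[OF \<open>finite B\<close>] \<open>card B = m\<close> atLeast0LessThan by auto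
  define G where "G = {ts\<in>arrangements m m. \<forall>c<m. (\<alpha> (ts ! c), \<beta> c) \<in> E}"
  have "G = {ts\<in>arrangements m m. \<forall>c<m. ts ! c < m \<and> c < m \<and> (\<alpha> (ts ! c), \<beta> c) \<in> E}"
    unfolding G_def arrangements_def by (auto dest: nth_mem)
  then have "permanent m (\<lambda>r c. if r < m \<and> c < m \<and> (\<alpha> r, \<beta> c) \<in> E then 1 / real k else 0)
      = card G / real k ^ m"
    by (simp add: permanent_indicator power_one_over)
  moreover have "exp (- real m) \<le> permanent m (\<lambda>r c. if r < m \<and> c < m \<and> (\<alpha> r, \<beta> c) \<in> E then 1 / real k else 0)"
    using biadjacency_doubly_stochastic[OF reg \<open>k \<ge> 1\<close> \<alpha> \<beta>] \<open>m \<ge> 1\<close>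
    by (rule permanent_doubly_stochastic_ge)
  ultimately have "real k ^ m * exp (- real m) \<le> real k ^ m * (card G / real k ^ m)"
    by (intro mult_left_mono) auto
  also have "\<dots> = card G" using \<open>k \<ge> 1\<close> by simp
  also have "card G \<le> card {M. perfect_matching A B E M}"
    unfolding G_def by (rule card_edge_arrangements_le[OF \<open>finite E\<close> \<alpha> \<beta>])
  finally show ?thesis by simp
qed

section \<open>Counting 1-factorizations\<close>

lemma bip_regular_Diff_perfect_matching:
  assumes reg: "bip_regular A B E (Suc k)" and M: "perfect_matching A B E M"
  shows "bip_regular A B (E - M) k"
proof -
  have fin: "finite A" "finite B" and E: "E \<subseteq> A \<times> B"
    and deg_A: "\<forall>x\<in>A. bip_deg_A E x = Suc k" and deg_B: "\<forall>y\<in>B. bip_deg_B E y = Suc k"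
    using reg unfolding bip_regular_def bip_graph_def by auto
  have ME: "M \<subseteq> E" and MA: "\<forall>x\<in>A. \<exists>!y. (x, y) \<in> M" and MB: "\<forall>y\<in>B. \<exists>!x. (x, y) \<in> M"
    using M unfolding perfect_matching_def by auto
  have "bip_deg_A (E - M) x = k" if x: "x \<in> A" for x
  proof -
    obtain y where y: "(x, y) \<in> M" and y_unique: "\<And>y'. (x, y') \<in> M \<Longrightarrow> y' = y" using MA x by blast
    have "{b. (x, b) \<in> E - M} = {b. (x, b) \<in> E} - {y}" using y y_unique by blast
    moreover have "finite {b. (x, b) \<in> E}" by (rule finite_subset[OF _ fin(2)]) (use E in blast)
    moreover have "y \<in> {b. (x, b) \<in> E}" using y ME by auto
    ultimately show ?thesis using deg_A x unfolding bip_deg_A_def by simp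
  qed
  moreover have "bip_deg_B (E - M) y = k" if y: "y \<in> B" for y
  proof -
    obtain x where x: "(x, y) \<in> M" and x_unique: "\<And>x'. (x', y) \<in> M \<Longrightarrow> x' = x" using MB y by blast
    have "{a. (a, y) \<in> E - M} = {a. (a, y) \<in> E} - {x}" using x x_unique by blast
    moreover have "finite {a. (a, y) \<in> E}" by (rule finite_subset[OF _ fin(1)]) (use E in blast)
    moreover have "x \<in> {a. (a, y) \<in> E}" using x ME by auto
    ultimately show ?thesis using deg_B y unfolding bip_deg_B_def by simp
  qed
  moreover have "E - M \<subseteq> A \<times> B" using E by auto
  ultimately show ?thesis using fin unfolding bip_regular_def bip_graph_def by blast
qed

lemma bip_regular_0_empty:
  assumes "bip_regular A B E 0"
  shows "E = {}"
proof (rule ccontr)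
  assume "E \<noteq> {}"
  then obtain x y where xy: "(x, y) \<in> E" by auto
  have fin: "finite B" and E: "E \<subseteq> A \<times> B" and deg_A: "\<forall>x\<in>A. bip_deg_A E x = 0"
    using assms unfolding bip_regular_def bip_graph_def by auto
  have "finite {b. (x, b) \<in> E}" by (rule finite_subset[OF _ fin]) (use E in blast)
  moreover have "card {b. (x, b) \<in> E} = 0" using deg_A xy E unfolding bip_deg_A_def by auto
  ultimately show False using xy by simp
qed

fun matching_sequences :: "'a set \<Rightarrow> 'b set \<Rightarrow> nat \<Rightarrow> ('a \<times> 'b) set \<Rightarrow> ('a \<times> 'b) set list set" where
  "matching_sequences A B 0 E = (if E = {} then {[]} else {})"
| "matching_sequences A B (Suc k) E =
     (\<Union>M\<in>{M. perfect_matching A B E M}. (#) M ` matching_sequences A B k (E - M))"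

lemma finite_matching_sequences: "finite E \<Longrightarrow> finite (matching_sequences A B k E)"
  by (induction k arbitrary: E) (simp_all add: finite_perfect_matchings)

lemma matching_sequence_one_factorization:
  assumes "L \<in> matching_sequences A B k E" and "A \<noteq> {}"
  shows "length L = k \<and> set L \<in> one_factorizations A B E"
  using assms(1)
proof (induction k arbitrary: E L)
  case 0
  then show ?case by (simp add: one_factorizations_def split: if_splits)
next
  case (Suc k)
  then obtain M L' where M: "perfect_matching A B E M" and L: "L = M # L'"
    and L': "L' \<in> matching_sequences A B k (E - M)"
    by auto
  have IH: "length L' = k" "set L' \<in> one_factorizations A B (E - M)"
    using Suc.IH[OF L'] by auto
  then have L'_union: "\<Union>(set L') = E - M"
    and L'_disjoint: "\<forall>N\<in>set L'. \<forall>N'\<in>set L'. N \<noteq> N' \<longrightarrow> N \<inter> N' = {}"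
    and L'_matchings: "\<forall>N\<in>set L'. N \<noteq> {} \<and> perfect_matching A B (E - M) N"
    unfolding one_factorizations_def by auto
  have "M \<subseteq> E" using M unfolding perfect_matching_def by blast
  have "M \<noteq> {}" using M \<open>A \<noteq> {}\<close> unfolding perfect_matching_def by blast
  have L'_matchings_E: "perfect_matching A B E N" if "N \<in> set L'" for N
  proof -
    have "perfect_matching A B (E - M) N" using L'_matchings that by blast
    then show ?thesis unfolding perfect_matching_def by blast
  qed
  then have "\<forall>N\<in>set L. N \<noteq> {} \<and> perfect_matching A B E N"
    using L'_matchings M \<open>M \<noteq> {}\<close> L by auto
  moreover have "\<Union>(set L) = E" unfolding L using L'_union \<open>M \<subseteq> E\<close> by auto
  moreover have "\<forall>N\<in>set L. \<forall>N'\<in>set L. N \<noteq> N' \<longrightarrow> N \<inter> N' = {}"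
  proof -
    have "N \<subseteq> E - M" if "N \<in> set L'" for N using L'_union that by blast
    then show ?thesis unfolding L using L'_disjoint by fastforce
  qed
  ultimately show ?case using IH(1) L unfolding one_factorizations_def by simp
qed

lemma card_matching_sequences_ge:
  assumes "bip_regular A B E k" "card A = m" "card B = m" "m \<ge> 1"
  shows "fact k ^ m * exp (- real (k * m)) \<le> card (matching_sequences A B k E)"
  using assms(1)
proof (induction k arbitrary: E)
  case 0
  then show ?case using bip_regular_0_empty by simp
next
  case (Suc k)
  have "finite E" using Suc.prems finite_bip_edges unfolding bip_regular_def by blast
  define P where "P = {M. perfect_matching A B E M}"
  have "finite P" unfolding P_def using \<open>finite E\<close> by (rule finite_perfect_matchings)
  have "card (matching_sequences A B (Suc k) E) = (\<Sum>M\<in>P. card ((#) M ` matching_sequences A B k (E - M)))"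
    unfolding matching_sequences.simps P_def[symmetric]
    using \<open>finite P\<close> \<open>finite E\<close> by (intro card_UN_disjoint) (auto intro: finite_matching_sequences)
  also have "\<dots> = (\<Sum>M\<in>P. card (matching_sequences A B k (E - M)))"
    by (intro sum.cong refl card_image) (auto simp: inj_on_def)
  finally have card_eq: "real (card (matching_sequences A B (Suc k) E))
      = (\<Sum>M\<in>P. real (card (matching_sequences A B k (E - M))))"
    by simp
  have "fact (Suc k) ^ m * exp (- real (Suc k * m))
      = real (Suc k) ^ m * exp (- real m) * (fact k ^ m * exp (- real (k * m)))"
  proof -
    have "(fact (Suc k) :: real) ^ m = real (Suc k) ^ m * fact k ^ m"
      by (simp only: fact_Suc power_mult_distrib)
    moreover have "exp (- real (Suc k * m)) = exp (- real m) * exp (- real (k * m))"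
      by (simp add: exp_add[symmetric] algebra_simps)
    ultimately show ?thesis by (simp only: mult_ac)
  qed
  also have "\<dots> \<le> card P * (fact k ^ m * exp (- real (k * m)))"
    using card_perfect_matchings_ge[OF Suc.prems _ assms(2-4)] unfolding P_def
    by (intro mult_right_mono) auto
  also have "\<dots> = (\<Sum>M\<in>P. fact k ^ m * exp (- real (k * m)))"
    by simp
  also have "\<dots> \<le> (\<Sum>M\<in>P. real (card (matching_sequences A B k (E - M))))"
    using Suc.IH bip_regular_Diff_perfect_matching[OF Suc.prems] unfolding P_def
    by (intro sum_mono) auto
  also have "\<dots> = card (matching_sequences A B (Suc k) E)"
    by (rule card_eq[symmetric])
  finally show ?case .
qed

text \<open>Each 1-factorization arises from at most \<open>k\<^sup>k\<close> matching sequences.\<close>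
lemma card_one_factorizations_mult_ge:
  assumes reg: "bip_regular A B E k" and "card A = m" "card B = m" "m \<ge> 1"
  shows "fact k ^ m * exp (- real (k * m)) \<le> card (one_factorizations A B E) * real k ^ k"
proof -
  have "finite E" using reg finite_bip_edges unfolding bip_regular_def by blast
  have "A \<noteq> {}" using \<open>card A = m\<close> \<open>m \<ge> 1\<close> by auto
  define S where "S = matching_sequences A B k E"
  have "finite S" unfolding S_def using \<open>finite E\<close> by (rule finite_matching_sequences)
  have S: "length L = k" "set L \<in> one_factorizations A B E" if "L \<in> S" for L
    using matching_sequence_one_factorization[OF that[unfolded S_def] \<open>A \<noteq> {}\<close>] by auto
  have "finite (one_factorizations A B E)"
    by (rule finite_subset[of _ "Pow (Pow E)"]) (auto simp: one_factorizations_def \<open>finite E\<close>)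
  have fibre: "card {L\<in>S. set L = F} \<le> k ^ k" if F: "F \<in> set ` S" for F
  proof -
    obtain L0 where "L0 \<in> S" "F = set L0" using F by auto
    then have "card F \<le> k" using S card_length by metis
    have "card {L\<in>S. set L = F} \<le> card {L. set L \<subseteq> F \<and> length L = k}"
      using S \<open>F = set L0\<close> by (intro card_mono finite_lists_length_eq) auto
    also have "\<dots> = card F ^ k" using \<open>F = set L0\<close> by (simp add: card_lists_length_eq)
    also have "\<dots> \<le> k ^ k" using \<open>card F \<le> k\<close> by (rule power_mono) simp
    finally show ?thesis .
  qed
  have "card S = card (\<Union>F\<in>set ` S. {L\<in>S. set L = F})" by (rule arg_cong[of _ _ card]) auto
  also have "\<dots> \<le> (\<Sum>F\<in>set ` S. card {L\<in>S. set L = F})"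
    using \<open>finite S\<close> by (intro card_UN_le) simp
  also have "\<dots> \<le> card (set ` S) * k ^ k"
    using sum_mono[OF fibre] by simp
  also have "\<dots> \<le> card (one_factorizations A B E) * k ^ k"
    using S \<open>finite (one_factorizations A B E)\<close> by (intro mult_right_mono card_mono) auto
  finally have "real (card S) \<le> card (one_factorizations A B E) * real k ^ k"
    by (metis of_nat_le_iff of_nat_mult of_nat_power)
  moreover have "fact k ^ m * exp (- real (k * m)) \<le> card S"
    unfolding S_def using reg assms(2-4) by (rule card_matching_sequences_ge)
  ultimately show ?thesis by linarith
qed

lemma fact_ge_twice_power_div_exp:
  assumes "k \<ge> 1"
  shows "2 * (real k / exp 1) ^ k \<le> fact k"
proof -
  obtain j where j: "k = Suc j" using assms by (cases k) auto
  have "(fact k :: real) = real k * fact j" "real k ^ k = real k * real k ^ j"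
    unfolding j by simp_all
  then have "real k ^ j / fact j = real k ^ k / fact k"
    using assms by simp
  then have "2 * (real k ^ k / fact k) = (\<Sum>n\<in>{j, k}. real k ^ n / fact n)"
    using j by simp
  also have "\<dots> \<le> (\<Sum>n. real k ^ n / fact n)"
    using summable_exp[of "real k"] by (intro sum_le_suminf) (auto simp: divide_inverse mult.commute)
  also have "\<dots> = exp (real k)"
    by (simp add: exp_def divide_inverse mult.commute)
  finally have "2 * real k ^ k \<le> fact k * exp 1 ^ k"
    by (simp add: field_simps exp_of_nat_mult[symmetric])
  then show ?thesis by (simp add: power_divide field_simps)
qed

theorem card_one_factorizations_ge:
  assumes reg: "bip_regular A B E k" and "k \<ge> 1" and "card A = m" "card B = m" "m \<ge> 1"
    and "real k ^ k \<le> 2 ^ m"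
  shows "(real k / exp 2) ^ (k * m) \<le> card (one_factorizations A B E)"
proof -
  have "real k ^ k * (real k / exp 2) ^ (k * m) \<le> 2 ^ m * (real k / exp 2) ^ (k * m)"
    using assms(6) by (intro mult_right_mono) auto
  also have "\<dots> = (2 * (real k / exp 1) ^ k) ^ m * exp (- real (k * m))"
  proof -
    have "exp (- real (k * m)) = (1 / exp 1) ^ (k * m)"
      by (simp add: exp_minus inverse_eq_divide power_one_over exp_of_nat_mult[symmetric] mult.commute)
    moreover have "exp (2::real) = exp 1 * exp 1" by (simp add: exp_add[symmetric])
    ultimately show ?thesis
      by (simp add: power_mult_distrib power_mult[symmetric] power_divide mult.commute)
  qed
  also have "\<dots> \<le> fact k ^ m * exp (- real (k * m))"
    using fact_ge_twice_power_div_exp[OF \<open>k \<ge> 1\<close>] by (intro mult_right_mono power_mono) auto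
  also have "\<dots> \<le> card (one_factorizations A B E) * real k ^ k"
    using reg assms(3-5) by (rule card_one_factorizations_mult_ge)
  finally show ?thesis using \<open>k \<ge> 1\<close> by (simp add: mult.commute)
qed

lemma exp_2_le_9: "exp (2::real) \<le> 9"
proof -
  have "exp (2::real) = exp 1 ^ 2" by (simp add: exp_of_nat_mult[symmetric])
  also have "\<dots> \<le> 3 ^ 2" by (rule power_mono[OF exp_le]) simp
  finally show ?thesis by simp
qed

lemma twice_le_of_le_div_ln:
  fixes r1 r2 :: nat and \<alpha> :: real
  assumes "9 \<le> r1" "0 < \<alpha>" "\<alpha> \<le> 1" and r2: "real r2 \<le> \<alpha> ^ 5 * real r1 / ln (real r1)"
  shows "2 * r2 \<le> r1"
proof -
  have "2 \<le> ln (real r1)" using exp_2_le_9 \<open>9 \<le> r1\<close> by (subst ln_ge_iff) auto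
  moreover have "\<alpha> ^ 5 \<le> 1" using assms by (simp add: power_le_one)
  ultimately have "\<alpha> ^ 5 * real r1 / ln (real r1) \<le> 1 * real r1 / 2"
    using assms by (intro frac_le mult_right_mono) auto
  then show ?thesis using r2 by linarith
qed

lemma card_one_factorizations_ge_diff:
  fixes r1 r2 m :: nat
  assumes "18 \<le> r1" "(2 * r1) ^ (2 * r1) \<le> m" "2 * r2 \<le> r1"
    and "card A = m" "card B = m" "bip_regular A B R (r1 + r2)"
  shows "((real r1 - real r2) / exp 2) ^ ((r1 - r2) * m) \<le> card (one_factorizations A B R)"
proof -
  have "(1::nat) \<le> (2 * r1) ^ (2 * r1)" using assms(1) by simp
  then have "1 \<le> m" using assms(2) by linarith
  have "real (r1 + r2) ^ (r1 + r2) \<le> real (2 * r1) ^ (2 * r1)"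
    using assms(1,3) by (intro order.trans[OF power_mono power_increasing]) auto
  also have "\<dots> \<le> 2 ^ m"
    using assms(2) less_exp[of m] by (metis of_nat_le_iff of_nat_numeral of_nat_power less_imp_le order.trans)
  finally have regular_bound: "((r1 + r2) / exp 2) ^ ((r1 + r2) * m) \<le> card (one_factorizations A B R)"
    using \<open>1 \<le> m\<close> assms(1,4-6) by (intro card_one_factorizations_ge) auto
  define K where "K = real r1 - real r2"
  have "1 \<le> K / exp 2" unfolding K_def using exp_2_le_9 assms(1,3) by simp
  then have "(K / exp 2) ^ ((r1 - r2) * m) \<le> (K / exp 2) ^ ((r1 + r2) * m)"
    by (intro power_increasing) auto
  also have "\<dots> \<le> ((r1 + r2) / exp 2) ^ ((r1 + r2) * m)"
  proof (intro power_mono divide_right_mono)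
    show "K \<le> real (r1 + r2)" unfolding K_def by simp
    show "0 \<le> K / exp 2" using \<open>1 \<le> K / exp 2\<close> by linarith
  qed simp
  also note regular_bound
  finally show ?thesis unfolding K_def .
qed

theorem mainTheorem7:
  shows "\<forall>\<alpha>::real. 0 < \<alpha> \<and> \<alpha> \<le> 1/10 \<longrightarrow>
    (\<exists>r0::nat. \<forall>r1::nat. r1 \<ge> r0 \<longrightarrow>
      (\<exists>m0::nat. \<forall>m::nat. m \<ge> m0 \<longrightarrow>
        (\<forall>(A::nat set) (B::nat set) (H::(nat \<times> nat) set) (R::(nat \<times> nat) set) (r2::nat).
           good \<alpha> r1 m A B H \<longrightarrow>
           real r2 \<le> \<alpha> ^ 5 * real r1 / ln (real r1) \<longrightarrow>
           H \<subseteq> R \<longrightarrow> bip_regular A B R (r1 + r2) \<longrightarrow>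
           real (card (one_factorizations A B R))
             \<ge> ((real r1 - real r2) / exp 2) ^ ((r1 - r2) * m))))"
proof -
  have bound: "((real r1 - real r2) / exp 2) ^ ((r1 - r2) * m) \<le> card (one_factorizations A B R)"
    if "0 < \<alpha>" "\<alpha> \<le> 1/10" "18 \<le> r1" "(2 * r1) ^ (2 * r1) \<le> m" "good \<alpha> r1 m A B H"
      "real r2 \<le> \<alpha> ^ 5 * real r1 / ln (real r1)" "bip_regular A B R (r1 + r2)"
    for \<alpha> :: real and r1 m r2 :: nat and A B :: "nat set" and H R :: "(nat \<times> nat) set"
  proof (rule card_one_factorizations_ge_diff)
    show "2 * r2 \<le> r1" using that by (intro twice_le_of_le_div_ln[of r1 \<alpha>]) auto
    show "card A = m" "card B = m" using \<open>good \<alpha> r1 m A B H\<close> unfolding good_def by auto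
  qed (use that in auto)
  show ?thesis by (blast intro: bound)
qed

end
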